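(* If $\mathcal C\subseteq2^{[n]}$ is a stable hyperplane code, then $\mathcal C$ can be realized by a stable pair $(\mathcal H,\mathcal P)$, i.e. $\mathcal C=\mathrm{code}(\mathcal H,\mathcal P)$, where $\mathcal P=\bigcap_{j\in[m]}B_j^+$ is an open polytope, given as the intersection of open half-spaces bounded by hyperplanes $\mathcal B=\{B_1,\dots,B_m\}$, such that the arrangement $\mathcal H\cup\mathcal B$ has generic intersections in $\mathbb R^d$.
   Context: An oriented affine hyperplane is $H=\{x\in\mathbb R^d:w\cdot x-h=0\}$ with $w\neq0$, and $H^+=\{w\cdot x-h>0\}$. For $\mathcal H=\{H_1,\dots,H_n\}$ and open convex $X$, $\mathrm{code}(\mathcal H,X)$ is the set of $\sigma\subseteq[n]$ with $\bigl(\bigcap_{i\in\sigma}(H_i^+\cap X)\bigr)\setminus\bigcup_{j\notin\sigma}H_j^+\ne\emptyset$ (for $\sigma=\emptyset$: $X\setminus\bigcup_iH_i^+\ne\emptyset$). $(\mathcal H,X)$ is stable if $X$ is open convex and for every $\sigma\subseteq[n]$ with $X\cap\bigcap_{i\in\sigma}H_i\neq\emptyset$, $\dim\bigcap_{i\in\sigma}H_i=d-|\sigma|$; a stable hyperplane code is the code of a stable pair. A finite set of hyperplanes $\mathcal A$ has generic intersections in $\mathbb R^d$ if every subfamily with nonempty intersection has intersection of dimension $d$ minus the size of the subfamily. *)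

theory Defs
  imports "HOL-Analysis.Analysis"
begin

text \<open>An oriented affine hyperplane is given by a pair (w, h) with w \<noteq> 0;
  H = {x. w \<bullet> x - h = 0}, H+ = {x. w \<bullet> x - h > 0}.
  The ambient space R^d is an arbitrary euclidean_space type 'a, d = DIM('a).\<close>

definition valid_hyp :: "'a::euclidean_space \<times> real \<Rightarrow> bool" where
  "valid_hyp H \<longleftrightarrow> fst H \<noteq> 0"

definition hyp :: "'a::euclidean_space \<times> real \<Rightarrow> 'a set" where
  "hyp H = {x. fst H \<bullet> x - snd H = 0}"

definition hpos :: "'a::euclidean_space \<times> real \<Rightarrow> 'a set" where
  "hpos H = {x. fst H \<bullet> x - snd H > 0}"

definition hcode :: "nat \<Rightarrow> (nat \<Rightarrow> 'a::euclidean_space \<times> real) \<Rightarrow> 'a set \<Rightarrow> nat set set" where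
  "hcode n H X = {\<sigma>. \<sigma> \<subseteq> {1..n} \<and>
      (X \<inter> (\<Inter>i\<in>\<sigma>. hpos (H i))) - (\<Union>j\<in>{1..n} - \<sigma>. hpos (H j)) \<noteq> {}}"

definition stable_pair :: "nat \<Rightarrow> (nat \<Rightarrow> 'a::euclidean_space \<times> real) \<Rightarrow> 'a set \<Rightarrow> bool" where
  "stable_pair n H X \<longleftrightarrow> (\<forall>i\<in>{1..n}. valid_hyp (H i)) \<and> open X \<and> convex X \<and>
     (\<forall>\<sigma>. \<sigma> \<subseteq> {1..n} \<longrightarrow> X \<inter> (\<Inter>i\<in>\<sigma>. hyp (H i)) \<noteq> {} \<longrightarrow>
        aff_dim (\<Inter>i\<in>\<sigma>. hyp (H i)) = int DIM('a) - int (card \<sigma>))"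

definition generic_intersections :: "('i \<Rightarrow> 'a::euclidean_space \<times> real) \<Rightarrow> 'i set \<Rightarrow> bool" where
  "generic_intersections A I \<longleftrightarrow> (\<forall>S. S \<subseteq> I \<longrightarrow> (\<Inter>i\<in>S. hyp (A i)) \<noteq> {} \<longrightarrow>
        aff_dim (\<Inter>i\<in>S. hyp (A i)) = int DIM('a) - int (card S))"

definition join_fam :: "(nat \<Rightarrow> 'b) \<Rightarrow> (nat \<Rightarrow> 'b) \<Rightarrow> nat + nat \<Rightarrow> 'b" where
  "join_fam H B = case_sum H B"

end

theory Submission
  imports Defs
begin

text \<open>Every codeword is witnessed by a point of X lying on none of the hyperplanes: by stability the
  normals of the hyperplanes through a point are linearly independent, so one can move off all of
  them in any prescribed direction. Finitely many such witnesses sit in the interior of a polytope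
  K contained in X, and by compactness of K a small enough shift of all offsets of the
  hyperplanes neither creates new codewords on K nor changes the codewords of the witnesses. The
  offsets of the H_i and of the facet hyperplanes of K (moved slightly inwards) are then chosen one
  at a time, avoiding the finitely many values that would create a degenerate intersection.\<close>

definition pos_indices :: "nat \<Rightarrow> (nat \<Rightarrow> 'a::euclidean_space \<times> real) \<Rightarrow> 'a \<Rightarrow> nat set" where
  "pos_indices n H x = {k \<in> {1..n}. x \<in> hpos (H k)}"

definition with_offsets :: "(nat \<Rightarrow> 'a::euclidean_space \<times> real) \<Rightarrow> (nat \<Rightarrow> real) \<Rightarrow> nat \<Rightarrow> 'a \<times> real" where
  "with_offsets H c k = (fst (H k), c k)"

abbreviation offsets_within :: "nat \<Rightarrow> (nat \<Rightarrow> 'a::euclidean_space \<times> real) \<Rightarrow> real \<Rightarrow> (nat \<Rightarrow> real) \<Rightarrow> bool"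
  where "offsets_within n H e c \<equiv> \<forall>k\<in>{1..n}. \<bar>c k - snd (H k)\<bar> < e"

lemma with_offsets_simps [simp]:
  "fst (with_offsets H c k) = fst (H k)" "snd (with_offsets H c k) = c k"
  by (simp_all add: with_offsets_def)

lemma pos_indices_subset: "pos_indices n H x \<subseteq> {1..n}"
  by (auto simp: pos_indices_def)

lemma mem_hpos_iff: "x \<in> hpos H \<longleftrightarrow> snd H < fst H \<bullet> x"
  by (simp add: hpos_def)

lemma mem_hyp_iff: "x \<in> hyp H \<longleftrightarrow> fst H \<bullet> x = snd H"
  by (simp add: hyp_def)

lemma open_hpos: "open (hpos H)"
  using open_halfspace_gt[of "snd H" "fst H"] by (simp add: hpos_def)

lemma convex_hpos: "convex (hpos H)"
  using convex_halfspace_gt[of "snd H" "fst H"] by (simp add: hpos_def)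

lemma hcode_eq_image: "hcode n H X = pos_indices n H ` X"
proof (intro set_eqI iffI)
  fix \<sigma> assume "\<sigma> \<in> hcode n H X"
  then obtain x where "x \<in> X" "\<sigma> \<subseteq> {1..n}" "\<forall>i\<in>\<sigma>. x \<in> hpos (H i)"
    "\<forall>j\<in>{1..n} - \<sigma>. x \<notin> hpos (H j)"
    unfolding hcode_def by blast
  then have "\<sigma> = pos_indices n H x" unfolding pos_indices_def by blast
  with \<open>x \<in> X\<close> show "\<sigma> \<in> pos_indices n H ` X" by blast
qed (auto simp: hcode_def pos_indices_def)

lemma hcode_mono: "X \<subseteq> Y \<Longrightarrow> hcode n H X \<subseteq> hcode n H Y"
  by (auto simp: hcode_eq_image)

lemma finite_hcode: "finite (hcode n H X)"
  by (rule finite_subset[of _ "Pow {1..n}"]) (auto simp: hcode_def)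

section \<open>Normals and affine dimension\<close>

lemma dim_orthogonal_vectors:
  fixes V :: "'a::euclidean_space set"
  shows "dim {y. \<forall>v\<in>V. v \<bullet> y = 0} = DIM('a) - dim V"
proof -
  have "orthogonal x y" if "x \<in> span V" "\<forall>v\<in>V. v \<bullet> y = 0" for x y
    using orthogonal_to_span[OF that(1), of y] that(2)
    by (simp add: orthogonal_commute orthogonal_def)
  then have "{y. \<forall>v\<in>V. v \<bullet> y = 0} = {y \<in> UNIV. \<forall>x \<in> span V. orthogonal x y}"
    by (auto simp: orthogonal_def intro: span_base)
  moreover have "dim {y \<in> UNIV. \<forall>x \<in> span V. orthogonal x y} + dim (span V) = dim (UNIV::'a set)"
    by (rule dim_subspace_orthogonal_to_vectors) auto
  ultimately show ?thesis by simp
qed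

lemma aff_dim_Inter_hyp:
  fixes G :: "'i \<Rightarrow> 'a::euclidean_space \<times> real"
  assumes "x \<in> (\<Inter>i\<in>S. hyp (G i))"
  shows "aff_dim (\<Inter>i\<in>S. hyp (G i)) = int DIM('a) - int (dim ((\<lambda>i. fst (G i)) ` S))"
proof -
  let ?V = "(\<lambda>i. fst (G i)) ` S"
  let ?L = "{y. \<forall>v\<in>?V. v \<bullet> y = 0}"
  have x: "\<forall>i\<in>S. fst (G i) \<bullet> x = snd (G i)" using assms by (auto simp: mem_hyp_iff)
  have "(\<Inter>i\<in>S. hyp (G i)) = (+) x ` ?L"
  proof (intro set_eqI iffI)
    fix y assume "y \<in> (\<Inter>i\<in>S. hyp (G i))"
    then have "y - x \<in> ?L" using x by (auto simp: mem_hyp_iff inner_diff_right)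
    then show "y \<in> (+) x ` ?L" by (intro image_eqI[where x = "y - x"]) simp_all
  qed (use x in \<open>auto simp: mem_hyp_iff inner_add_right\<close>)
  then have "aff_dim (\<Inter>i\<in>S. hyp (G i)) = aff_dim ?L" by (simp add: aff_dim_translation_eq)
  also have "\<dots> = int (dim ?L)"
    by (rule aff_dim_subspace) (auto simp: subspace_def inner_add_right)
  also have "\<dots> = int DIM('a) - int (dim ?V)"
    using dim_orthogonal_vectors[of ?V] dim_subset_UNIV[of ?V] by simp
  finally show ?thesis .
qed

lemma aff_dim_Inter_hyp_eq_iff:
  fixes G :: "'i \<Rightarrow> 'a::euclidean_space \<times> real"
  assumes "(\<Inter>i\<in>S. hyp (G i)) \<noteq> {}"
  shows "aff_dim (\<Inter>i\<in>S. hyp (G i)) = int DIM('a) - int (card S) \<longleftrightarrow>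
    dim ((\<lambda>i. fst (G i)) ` S) = card S"
proof -
  obtain x where "x \<in> (\<Inter>i\<in>S. hyp (G i))" using assms by blast
  then show ?thesis by (simp add: aff_dim_Inter_hyp)
qed

lemma generic_intersections_iff_dim:
  "generic_intersections G I \<longleftrightarrow>
     (\<forall>S\<subseteq>I. (\<Inter>i\<in>S. hyp (G i)) \<noteq> {} \<longrightarrow> dim ((\<lambda>i. fst (G i)) ` S) = card S)"
  unfolding generic_intersections_def using aff_dim_Inter_hyp_eq_iff by blast

lemma stable_pair_dim:
  fixes H :: "nat \<Rightarrow> 'a::euclidean_space \<times> real"
  assumes "stable_pair n H X" "\<sigma> \<subseteq> {1..n}" "x \<in> X" "x \<in> (\<Inter>i\<in>\<sigma>. hyp (H i))"
  shows "dim ((\<lambda>i. fst (H i)) ` \<sigma>) = card \<sigma>"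
proof -
  have "X \<inter> (\<Inter>i\<in>\<sigma>. hyp (H i)) \<noteq> {}" using assms(3,4) by blast
  then have "aff_dim (\<Inter>i\<in>\<sigma>. hyp (H i)) = int DIM('a) - int (card \<sigma>)"
    using assms(1,2) unfolding stable_pair_def by blast
  then show ?thesis using aff_dim_Inter_hyp_eq_iff assms(4) by blast
qed

lemma inner_eqs_solvable:
  fixes f :: "'i \<Rightarrow> 'a::euclidean_space"
  assumes "finite S" "dim (f ` S) = card S"
  shows "\<exists>v. \<forall>k\<in>S. f k \<bullet> v = t k"
  using assms
proof (induction S rule: finite_induct)
  case empty
  then show ?case by simp
next
  case (insert k S)
  have "dim (f ` S) \<le> card S"
    using dim_le_card[of "f ` S" "f ` S"] card_image_le[OF insert.hyps(1), of f]
    by (simp add: span_superset insert.hyps(1))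
  then have nsp: "f k \<notin> span (f ` S)" and dimS: "dim (f ` S) = card S"
    using insert.prems insert.hyps by (simp_all add: dim_insert split: if_splits)
  obtain v where v: "\<forall>i\<in>S. f i \<bullet> v = t i" using insert.IH[OF dimS] by blast
  obtain y z where y: "y \<in> span (f ` S)" and z: "\<And>w. w \<in> span (f ` S) \<Longrightarrow> orthogonal z w"
    and fk: "f k = y + z"
    using orthogonal_subspace_decomp_exists by metis
  have "z \<noteq> 0" using nsp y fk by auto
  moreover have "y \<bullet> z = 0" using z[OF y] by (simp add: orthogonal_def inner_commute)
  ultimately have fkz: "f k \<bullet> z \<noteq> 0" using fk by (simp add: inner_add_left)
  text \<open>z is orthogonal to the other normals, so moving along z only changes the k-th value.\<close>
  define s where "s = (t k - f k \<bullet> v) / (f k \<bullet> z)"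
  have "f i \<bullet> (v + s *\<^sub>R z) = t i" if "i \<in> insert k S" for i
  proof (cases "i = k")
    case True
    then show ?thesis using fkz by (simp add: s_def inner_add_right)
  next
    case False
    then have "orthogonal z (f i)" using that z[of "f i"] by (auto intro: span_base)
    then show ?thesis using v that False by (simp add: inner_add_right orthogonal_def inner_commute)
  qed
  then show ?case by blast
qed

section \<open>Choosing offsets generically\<close>

lemma inner_const_on_Inter_hyp:
  fixes G :: "'i \<Rightarrow> 'a::euclidean_space \<times> real"
  assumes "a \<in> span ((\<lambda>i. fst (G i)) ` S)"
    and "x \<in> (\<Inter>i\<in>S. hyp (G i))" "y \<in> (\<Inter>i\<in>S. hyp (G i))"
  shows "a \<bullet> x = a \<bullet> y"
proof -
  have "orthogonal (x - y) v" if "v \<in> (\<lambda>i. fst (G i)) ` S" for v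
    using that assms(2,3) by (auto simp: orthogonal_def mem_hyp_iff inner_diff_left inner_commute)
  then have "orthogonal a (x - y)"
    by (rule orthogonal_to_span[OF assms(1), THEN orthogonal_commute[THEN iffD1]])
  then show ?thesis by (simp add: orthogonal_def inner_diff_right)
qed

text \<open>On an intersection of hyperplanes whose normals span a, the value of a \<bullet> x is
  determined; these are the offsets a new hyperplane with normal a has to avoid.\<close>

definition forced_values :: "('i \<Rightarrow> 'a::euclidean_space) \<Rightarrow> ('i \<Rightarrow> real) \<Rightarrow> 'i set \<Rightarrow> 'a \<Rightarrow> real set" where
  "forced_values N c I a =
     (\<Union>S\<in>{S. S \<subseteq> I \<and> a \<in> span (N ` S)}. (\<lambda>x. a \<bullet> x) ` (\<Inter>i\<in>S. hyp (N i, c i)))"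

lemma finite_forced_values:
  assumes "finite I"
  shows "finite (forced_values N c I a)"
proof -
  have "finite ((\<lambda>x. a \<bullet> x) ` (\<Inter>i\<in>S. hyp (N i, c i)))" if "a \<in> span (N ` S)" for S
  proof (cases "(\<Inter>i\<in>S. hyp (N i, c i)) = {}")
    case False
    then obtain x0 where "x0 \<in> (\<Inter>i\<in>S. hyp (N i, c i))" by blast
    then have "a \<bullet> x = a \<bullet> x0" if "x \<in> (\<Inter>i\<in>S. hyp (N i, c i))" for x
      using inner_const_on_Inter_hyp[of a "\<lambda>i. (N i, c i)" S x x0] that \<open>a \<in> span (N ` S)\<close>
      by simp
    then have "(\<lambda>x. a \<bullet> x) ` (\<Inter>i\<in>S. hyp (N i, c i)) \<subseteq> {a \<bullet> x0}" by blast
    then show ?thesis by (rule finite_subset) simp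
  qed simp
  moreover have "finite {S. S \<subseteq> I \<and> a \<in> span (N ` S)}"
    by (rule finite_subset[of _ "Pow I"]) (use assms in auto)
  ultimately show ?thesis unfolding forced_values_def by (intro finite_UN_I) auto
qed

lemma generic_intersections_insert:
  fixes N :: "'i \<Rightarrow> 'a::euclidean_space"
  assumes gen: "generic_intersections (\<lambda>i. (N i, c i)) I"
    and I: "finite I" "j \<notin> I" and y: "y \<notin> forced_values N c I (N j)"
  shows "generic_intersections (\<lambda>i. (N i, (c(j := y)) i)) (insert j I)"
proof -
  let ?c' = "c(j := y)"
  have dim_S: "dim (N ` S) = card S"
    if S: "S \<subseteq> insert j I" and x: "x \<in> (\<Inter>i\<in>S. hyp (N i, ?c' i))" for S x
  proof -
    define S0 where "S0 = S - {j}"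
    have S0: "S0 \<subseteq> I" "j \<notin> S0" using S unfolding S0_def by auto
    have "finite S0" using S0(1) I(1) by (rule finite_subset)
    have "(\<Inter>i\<in>S0. hyp (N i, ?c' i)) = (\<Inter>i\<in>S0. hyp (N i, c i))"
      using S0 by (intro INF_cong) auto
    then have x0: "x \<in> (\<Inter>i\<in>S0. hyp (N i, c i))" using x unfolding S0_def by blast
    then have "(\<Inter>i\<in>S0. hyp (N i, c i)) \<noteq> {}" by blast
    with gen S0(1) have dim0: "dim (N ` S0) = card S0"
      by (simp add: generic_intersections_iff_dim)
    show ?thesis
    proof (cases "j \<in> S")
      case True
      have "N j \<notin> span (N ` S0)"
      proof
        assume span: "N j \<in> span (N ` S0)"
        have "y = N j \<bullet> x" using x True by (simp add: mem_hyp_iff)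
        then have "y \<in> (\<lambda>x. N j \<bullet> x) ` (\<Inter>i\<in>S0. hyp (N i, c i))" using x0 by blast
        then have "y \<in> forced_values N c I (N j)"
          using S0(1) span unfolding forced_values_def by blast
        with y show False ..
      qed
      moreover have "S = insert j S0" using True unfolding S0_def by blast
      ultimately show ?thesis using dim0 S0 \<open>finite S0\<close> by (simp add: dim_insert)
    qed (use dim0 S0_def in simp)
  qed
  show ?thesis
  proof (unfold generic_intersections_iff_dim, intro allI impI)
    fix S assume "S \<subseteq> insert j I" "(\<Inter>i\<in>S. hyp (N i, ?c' i)) \<noteq> {}"
    then show "dim ((\<lambda>i. fst (N i, ?c' i)) ` S) = card S" using dim_S by auto
  qed
qed

lemma generic_offsets_exist:
  fixes N :: "'i \<Rightarrow> 'a::euclidean_space"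
  assumes "finite I" "\<forall>i\<in>I. lo i < hi i"
  shows "\<exists>c. (\<forall>i\<in>I. lo i < c i \<and> c i < hi i) \<and> generic_intersections (\<lambda>i. (N i, c i)) I"
  using assms
proof (induction I rule: finite_induct)
  case empty
  show ?case by (simp add: generic_intersections_def)
next
  case (insert j I)
  obtain c where c: "\<forall>i\<in>I. lo i < c i \<and> c i < hi i"
    and gen: "generic_intersections (\<lambda>i. (N i, c i)) I"
    using insert.IH insert.prems by auto
  have "infinite ({lo j<..<hi j} - forced_values N c I (N j))"
    using Diff_infinite_finite[OF finite_forced_values[OF insert.hyps(1)], of "{lo j<..<hi j}"]
      insert.prems by simp
  then obtain y where y: "lo j < y" "y < hi j" "y \<notin> forced_values N c I (N j)"
    by (metis DiffE greaterThanLessThan_iff infinite_imp_nonempty ex_in_conv)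
  have "\<forall>i\<in>insert j I. lo i < (c(j := y)) i \<and> (c(j := y)) i < hi i"
    using c y insert.hyps(2) by auto
  then show ?case
    using generic_intersections_insert[OF gen insert.hyps y(3)] by blast
qed

lemma generic_perturbation:
  fixes H :: "nat \<Rightarrow> 'a::euclidean_space \<times> real" and a :: "nat \<Rightarrow> 'a" and b :: "nat \<Rightarrow> real"
  assumes "0 < e"
  obtains c d where "offsets_within n H e c" "\<forall>j\<in>{1..m}. b j - e < d j \<and> d j < b j"
    "generic_intersections (join_fam (with_offsets H c) (\<lambda>j. (- a j, - d j)))
       (Inl ` {1..n} \<union> Inr ` {1..m})"
proof -
  define N where "N = case_sum (\<lambda>i. fst (H i)) (\<lambda>j. - a j)"
  define lo where "lo = case_sum (\<lambda>i. snd (H i) - e) (\<lambda>j. - b j)"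
  define hi where "hi = case_sum (\<lambda>i. snd (H i) + e) (\<lambda>j. e - b j)"
  have "\<forall>z. lo z < hi z" using assms by (simp add: lo_def hi_def split: sum.split)
  then obtain c' where c': "\<forall>z\<in>Inl ` {1..n} \<union> Inr ` {1..m}. lo z < c' z \<and> c' z < hi z"
    and gen: "generic_intersections (\<lambda>z. (N z, c' z)) (Inl ` {1..n} \<union> Inr ` {1..m})"
    using generic_offsets_exist[of "Inl ` {1..n} \<union> Inr ` {1..m}" lo hi N] by blast
  have "join_fam (with_offsets H (c' \<circ> Inl)) (\<lambda>j. (- a j, - (- c' (Inr j)))) = (\<lambda>z. (N z, c' z))"
    by (auto simp: join_fam_def N_def with_offsets_def fun_eq_iff split: sum.split)
  moreover have "\<bar>(c' \<circ> Inl) k - snd (H k)\<bar> < e" if "k \<in> {1..n}" for k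
  proof -
    have "lo (Inl k) < c' (Inl k) \<and> c' (Inl k) < hi (Inl k)" using c' that by blast
    then show ?thesis by (simp add: lo_def hi_def abs_less_iff)
  qed
  moreover have "b j - e < - c' (Inr j) \<and> - c' (Inr j) < b j" if "j \<in> {1..m}" for j
  proof -
    have "lo (Inr j) < c' (Inr j) \<and> c' (Inr j) < hi (Inr j)" using c' that by blast
    then show ?thesis by (simp add: lo_def hi_def)
  qed
  ultimately show thesis using that[of "c' \<circ> Inl" "\<lambda>j. - c' (Inr j)"] gen by simp
qed

lemma stable_pair_if_generic:
  fixes H :: "nat \<Rightarrow> 'a::euclidean_space \<times> real"
  assumes gen: "generic_intersections (join_fam H B) (Inl ` {1..n} \<union> J)"
    and "\<forall>i\<in>{1..n}. valid_hyp (H i)" "open X" "convex X"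
  shows "stable_pair n H X"
  unfolding stable_pair_def
proof (intro conjI allI impI assms(2-4))
  fix \<sigma> assume \<sigma>: "\<sigma> \<subseteq> {1..n}" and ne: "X \<inter> (\<Inter>i\<in>\<sigma>. hyp (H i)) \<noteq> {}"
  have eq: "(\<Inter>z\<in>Inl ` \<sigma>. hyp (join_fam H B z)) = (\<Inter>i\<in>\<sigma>. hyp (H i))"
    by (simp add: join_fam_def)
  have "Inl ` \<sigma> \<subseteq> Inl ` {1..n} \<union> J" using \<sigma> by blast
  moreover have "(\<Inter>z\<in>Inl ` \<sigma>. hyp (join_fam H B z)) \<noteq> {}" using ne unfolding eq by blast
  ultimately have "aff_dim (\<Inter>z\<in>Inl ` \<sigma>. hyp (join_fam H B z)) =
      int DIM('a) - int (card (Inl ` \<sigma> :: (nat + nat) set))"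
    by (rule gen[unfolded generic_intersections_def, rule_format])
  then show "aff_dim (\<Inter>i\<in>\<sigma>. hyp (H i)) = int DIM('a) - int (card \<sigma>)"
    by (simp add: join_fam_def card_image)
qed

section \<open>Leaving the hyperplanes of a stable pair\<close>

lemma ray_into_open_halfspaces:
  fixes H :: "'i \<Rightarrow> 'a::euclidean_space \<times> real" and s :: "'i \<Rightarrow> real"
  assumes "open X" "q \<in> X" "finite K"
    and on_hyp: "\<forall>k\<in>K. q \<in> hyp (H k) \<longrightarrow> 0 < s k * (fst (H k) \<bullet> v)"
    and off_hyp: "\<forall>k\<in>K. q \<notin> hyp (H k) \<longrightarrow> 0 < s k * (fst (H k) \<bullet> q - snd (H k))"
  shows "\<exists>p\<in>X. \<forall>k\<in>K. 0 < s k * (fst (H k) \<bullet> p - snd (H k))"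
proof -
  define p where "p = (\<lambda>t::real. q + t *\<^sub>R v)"
  have "(p \<longlongrightarrow> q + 0 *\<^sub>R v) (at_right 0)"
    unfolding p_def by (intro tendsto_intros)
  then have p_tendsto: "(p \<longlongrightarrow> q) (at_right 0)" by simp
  have "\<forall>\<^sub>F t in at_right 0. 0 < s k * (fst (H k) \<bullet> p t - snd (H k))" if k: "k \<in> K" for k
  proof (cases "q \<in> hyp (H k)")
    case True
    then have eq: "s k * (fst (H k) \<bullet> p t - snd (H k)) = t * (s k * (fst (H k) \<bullet> v))" for t
      by (simp add: p_def mem_hyp_iff algebra_simps)
    have "0 < s k * (fst (H k) \<bullet> v)" using on_hyp k True by blast
    then have "0 < s k * (fst (H k) \<bullet> p t - snd (H k))" if "0 < t" for t
      unfolding eq using that by simp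
    then show ?thesis using eventually_at_right_less[of 0] by (auto elim: eventually_mono)
  next
    case False
    have "((\<lambda>t. s k * (fst (H k) \<bullet> p t - snd (H k)))
        \<longlongrightarrow> s k * (fst (H k) \<bullet> q - snd (H k))) (at_right 0)"
      by (intro tendsto_intros p_tendsto)
    then show ?thesis using off_hyp k False order_tendstoD(1) by blast
  qed
  then have "\<forall>\<^sub>F t in at_right 0. \<forall>k\<in>K. 0 < s k * (fst (H k) \<bullet> p t - snd (H k))"
    by (intro eventually_ball_finite assms(3)) auto
  moreover have "\<forall>\<^sub>F t in at_right 0. p t \<in> X"
    using topological_tendstoD[OF p_tendsto] assms(1,2) by blast
  ultimately have "\<forall>\<^sub>F t in at_right 0. p t \<in> X \<and> (\<forall>k\<in>K. 0 < s k * (fst (H k) \<bullet> p t - snd (H k)))"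
    by (simp add: eventually_conj_iff)
  then show ?thesis using eventually_happens'[OF trivial_limit_at_right_real] by blast
qed

lemma stable_pair_strict_point:
  fixes H :: "nat \<Rightarrow> 'a::euclidean_space \<times> real"
  assumes st: "stable_pair n H X" and q: "q \<in> X" and A: "A \<subseteq> {1..n}"
    and ge: "\<forall>k\<in>A. snd (H k) \<le> fst (H k) \<bullet> q"
    and le: "\<forall>k\<in>{1..n} - A. fst (H k) \<bullet> q \<le> snd (H k)"
  shows "\<exists>p\<in>X. pos_indices n H p = A \<and> (\<forall>k\<in>{1..n}. p \<notin> hyp (H k))"
proof -
  define Z where "Z = {k \<in> {1..n}. q \<in> hyp (H k)}"
  define sgn :: "nat \<Rightarrow> real" where "sgn k = (if k \<in> A then 1 else -1)" for k
  have "Z \<subseteq> {1..n}" "q \<in> (\<Inter>k\<in>Z. hyp (H k))" unfolding Z_def by auto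
  then have "finite Z" "dim ((\<lambda>k. fst (H k)) ` Z) = card Z"
    using finite_subset stable_pair_dim[OF st _ q] by auto
  then obtain v where v: "\<forall>k\<in>Z. fst (H k) \<bullet> v = sgn k"
    using inner_eqs_solvable by blast
  have "0 < sgn k * (fst (H k) \<bullet> v)" if "k \<in> {1..n}" "q \<in> hyp (H k)" for k
    using v that by (simp add: Z_def sgn_def)
  moreover have "0 < sgn k * (fst (H k) \<bullet> q - snd (H k))" if k: "k \<in> {1..n}" "q \<notin> hyp (H k)" for k
  proof -
    have "fst (H k) \<bullet> q \<noteq> snd (H k)" using k by (simp add: mem_hyp_iff)
    moreover have "snd (H k) \<le> fst (H k) \<bullet> q" if "k \<in> A" using ge that by blast
    moreover have "fst (H k) \<bullet> q \<le> snd (H k)" if "k \<notin> A" using le k that by blast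
    ultimately show ?thesis by (cases "k \<in> A") (simp_all add: sgn_def)
  qed
  ultimately obtain p where "p \<in> X" and sides: "\<forall>k\<in>{1..n}. 0 < sgn k * (fst (H k) \<bullet> p - snd (H k))"
    using ray_into_open_halfspaces[of X q "{1..n}" H sgn v] st q unfolding stable_pair_def by auto
  have "k \<in> A \<longleftrightarrow> snd (H k) < fst (H k) \<bullet> p" "p \<notin> hyp (H k)" if "k \<in> {1..n}" for k
  proof -
    have "0 < sgn k * (fst (H k) \<bullet> p - snd (H k))" using sides that by blast
    then show "k \<in> A \<longleftrightarrow> snd (H k) < fst (H k) \<bullet> p" "p \<notin> hyp (H k)"
      by (cases "k \<in> A"; simp add: sgn_def mem_hyp_iff)+
  qed
  then have "pos_indices n H p = A" "\<forall>k\<in>{1..n}. p \<notin> hyp (H k)"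
    using A by (auto simp: pos_indices_def mem_hpos_iff)
  then show ?thesis using \<open>p \<in> X\<close> by blast
qed

lemma weak_sides_in_hcode:
  fixes H :: "nat \<Rightarrow> 'a::euclidean_space \<times> real"
  assumes "stable_pair n H X" "q \<in> X" "A \<subseteq> {1..n}"
    and "\<forall>k\<in>A. snd (H k) \<le> fst (H k) \<bullet> q"
    and "\<forall>k\<in>{1..n} - A. fst (H k) \<bullet> q \<le> snd (H k)"
  shows "A \<in> hcode n H X"
proof -
  obtain p where "p \<in> X" "pos_indices n H p = A"
    using stable_pair_strict_point[OF assms] by blast
  then show ?thesis unfolding hcode_eq_image by blast
qed

lemma codeword_witness:
  assumes "stable_pair n H X" "\<sigma> \<in> hcode n H X"
  shows "\<exists>p\<in>X. pos_indices n H p = \<sigma> \<and> (\<forall>k\<in>{1..n}. p \<notin> hyp (H k))"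
proof -
  obtain q where q: "q \<in> X" "pos_indices n H q = \<sigma>"
    using assms(2) by (auto simp: hcode_eq_image)
  then have "\<sigma> \<subseteq> {1..n}" "\<forall>k\<in>\<sigma>. snd (H k) \<le> fst (H k) \<bullet> q"
    "\<forall>k\<in>{1..n} - \<sigma>. fst (H k) \<bullet> q \<le> snd (H k)"
    by (auto simp: pos_indices_def mem_hpos_iff)
  then show ?thesis using stable_pair_strict_point[OF assms(1) q(1)] by blast
qed

section \<open>Perturbing the offsets\<close>

lemma eventually_at_right_0_less: "0 < d \<Longrightarrow> \<forall>\<^sub>F e in at_right (0::real). e < d"
  by (auto simp: eventually_at_right_field)

lemma eventually_pos_indices_with_offsets:
  assumes "\<forall>k\<in>{1..n}. p \<notin> hyp (H k)"
  shows "\<forall>\<^sub>F e in at_right 0. \<forall>c. offsets_within n H e c \<longrightarrow>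
           pos_indices n (with_offsets H c) p = pos_indices n H p"
proof -
  have "\<forall>\<^sub>F e in at_right 0. \<forall>k\<in>{1..n}. e < \<bar>fst (H k) \<bullet> p - snd (H k)\<bar>"
    using assms by (intro eventually_ball_finite ballI eventually_at_right_0_less)
      (auto simp: mem_hyp_iff)
  then show ?thesis
  proof (rule eventually_mono, intro allI impI)
    fix e :: real and c
    assume "\<forall>k\<in>{1..n}. e < \<bar>fst (H k) \<bullet> p - snd (H k)\<bar>" "offsets_within n H e c"
    then have "c k < fst (H k) \<bullet> p \<longleftrightarrow> snd (H k) < fst (H k) \<bullet> p" if "k \<in> {1..n}" for k
      using that by fastforce
    then show "pos_indices n (with_offsets H c) p = pos_indices n H p"
      by (auto simp: pos_indices_def mem_hpos_iff)
  qed
qed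

lemma shifted_threshold_keeps_side:
  fixes y q h c e :: real
  assumes "\<bar>y - q\<bar> < \<bar>q - h\<bar> / 2" "e < \<bar>q - h\<bar> / 2" "\<bar>c - h\<bar> < e"
  shows "(q < h \<longrightarrow> y < c) \<and> (h < q \<longrightarrow> c < y)"
  using assms by (auto simp: abs_if split: if_splits)

lemma perturbed_code_near_point:
  assumes st: "stable_pair n H X" and q: "q \<in> X"
  shows "\<exists>U. open U \<and> q \<in> U \<and> (\<forall>\<^sub>F e in at_right 0. \<forall>c. offsets_within n H e c \<longrightarrow>
           pos_indices n (with_offsets H c) ` U \<subseteq> hcode n H X)"
proof -
  define D where "D = {k \<in> {1..n}. q \<notin> hyp (H k)}"
  define r where "r k = \<bar>fst (H k) \<bullet> q - snd (H k)\<bar> / 2" for k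
  define U where "U = (\<Inter>k\<in>D. {y. \<bar>fst (H k) \<bullet> y - fst (H k) \<bullet> q\<bar> < r k})"
  have r_pos: "0 < r k" if "k \<in> D" for k using that by (simp add: D_def r_def mem_hyp_iff)
  have "open {y. \<bar>fst (H k) \<bullet> y - fst (H k) \<bullet> q\<bar> < r k}" for k
    by (intro open_Collect_less continuous_intros)
  then have "open U" unfolding U_def D_def by (intro open_INT) auto
  moreover have "q \<in> U" using r_pos by (simp add: U_def)
  moreover have "\<forall>\<^sub>F e in at_right 0. \<forall>k\<in>D. e < r k"
    using r_pos by (intro eventually_ball_finite ballI eventually_at_right_0_less) (auto simp: D_def)
  then have "\<forall>\<^sub>F e in at_right 0. \<forall>c. offsets_within n H e c \<longrightarrow>
           pos_indices n (with_offsets H c) ` U \<subseteq> hcode n H X"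
  proof (rule eventually_mono, intro allI impI subsetI)
    fix e :: real and c \<sigma>
    assume e: "\<forall>k\<in>D. e < r k" and c: "offsets_within n H e c"
      and "\<sigma> \<in> pos_indices n (with_offsets H c) ` U"
    then obtain y where y: "y \<in> U" and \<sigma>: "\<sigma> = pos_indices n (with_offsets H c) y" by blast
    have side: "(fst (H k) \<bullet> q < snd (H k) \<longrightarrow> fst (H k) \<bullet> y < c k) \<and>
        (snd (H k) < fst (H k) \<bullet> q \<longrightarrow> c k < fst (H k) \<bullet> y)" if k: "k \<in> {1..n}" for k
    proof (cases "q \<in> hyp (H k)")
      case False
      then have "k \<in> D" using k by (simp add: D_def)
      then have "\<bar>fst (H k) \<bullet> y - fst (H k) \<bullet> q\<bar> < r k" "e < r k" "\<bar>c k - snd (H k)\<bar> < e"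
        using y e c k unfolding U_def by auto
      then show ?thesis unfolding r_def by (rule shifted_threshold_keeps_side)
    qed (simp add: mem_hyp_iff)
    have in_\<sigma>: "k \<in> \<sigma> \<longleftrightarrow> c k < fst (H k) \<bullet> y" if "k \<in> {1..n}" for k
      using that by (simp add: \<sigma> pos_indices_def mem_hpos_iff)
    have "\<sigma> \<subseteq> {1..n}" using pos_indices_subset \<sigma> by blast
    moreover have "\<forall>k\<in>\<sigma>. snd (H k) \<le> fst (H k) \<bullet> q"
      using side in_\<sigma> \<open>\<sigma> \<subseteq> {1..n}\<close> by (meson not_less order.asym subsetD)
    moreover have "\<forall>k\<in>{1..n} - \<sigma>. fst (H k) \<bullet> q \<le> snd (H k)"
      using side in_\<sigma> by (meson DiffE not_less)
    ultimately show "\<sigma> \<in> hcode n H X" by (rule weak_sides_in_hcode[OF st q])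
  qed
  ultimately show ?thesis by blast
qed

lemma eventually_perturbed_code_subset:
  assumes st: "stable_pair n H X" and K: "compact K" "K \<subseteq> X"
  shows "\<forall>\<^sub>F e in at_right 0. \<forall>c. offsets_within n H e c \<longrightarrow>
           hcode n (with_offsets H c) K \<subseteq> hcode n H X"
proof -
  have "\<forall>q\<in>K. \<exists>V. open V \<and> q \<in> V \<and>
      (\<forall>\<^sub>F e in at_right 0. \<forall>c. offsets_within n H e c \<longrightarrow>
         pos_indices n (with_offsets H c) ` V \<subseteq> hcode n H X)"
    using perturbed_code_near_point[OF st] K(2) by blast
  then obtain U where U: "\<forall>q\<in>K. open (U q) \<and> q \<in> U q \<and>
      (\<forall>\<^sub>F e in at_right 0. \<forall>c. offsets_within n H e c \<longrightarrow>
         pos_indices n (with_offsets H c) ` U q \<subseteq> hcode n H X)"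
    by (rule bchoice[THEN exE])
  have "K \<subseteq> (\<Union>q\<in>K. U q)" using U by blast
  then obtain T where T: "T \<subseteq> K" "finite T" "K \<subseteq> (\<Union>q\<in>T. U q)"
    using compactE_image[OF K(1), of K U] U by blast
  have "\<forall>\<^sub>F e in at_right 0. \<forall>q\<in>T. \<forall>c. offsets_within n H e c \<longrightarrow>
         pos_indices n (with_offsets H c) ` U q \<subseteq> hcode n H X"
    using U T(1) by (intro eventually_ball_finite[OF T(2)]) blast
  then show ?thesis
  proof (rule eventually_mono, intro allI impI subsetI)
    fix e :: real and c \<sigma>
    assume cover: "\<forall>q\<in>T. \<forall>c. offsets_within n H e c \<longrightarrow>
         pos_indices n (with_offsets H c) ` U q \<subseteq> hcode n H X"
      and c: "offsets_within n H e c" and "\<sigma> \<in> hcode n (with_offsets H c) K"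
    then obtain y where "y \<in> K" "\<sigma> = pos_indices n (with_offsets H c) y"
      by (auto simp: hcode_eq_image)
    moreover obtain q where "q \<in> T" "y \<in> U q" using T(3) \<open>y \<in> K\<close> by blast
    ultimately show "\<sigma> \<in> hcode n H X" using cover c by blast
  qed
qed

section \<open>A polytope carrying the code\<close>

lemma polytope_neighbourhood:
  fixes W :: "'a::euclidean_space set"
  assumes "finite W" "W \<subseteq> X" "open X" "convex X"
  shows "\<exists>K. polytope K \<and> K \<subseteq> X \<and> W \<subseteq> interior K"
proof -
  have "\<exists>V. finite V \<and> convex hull V \<subseteq> X \<and> x \<in> interior (convex hull V)" if "x \<in> W" for x
  proof -
    have "x \<in> X" using that assms(2) by blast
    then obtain a b where ab: "cbox a b \<subseteq> X" "x \<in> box a b"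
      by (rule open_contains_cbox[OF assms(3)])
    moreover obtain V where "finite V" "cbox a b = convex hull V"
      using polytope_interval unfolding polytope_def by blast
    ultimately show ?thesis by (metis interior_cbox)
  qed
  then obtain V where V: "\<forall>x\<in>W. finite (V x) \<and> convex hull V x \<subseteq> X \<and> x \<in> interior (convex hull V x)"
    by (rule bchoice[THEN exE, OF ballI])
  define K where "K = convex hull (\<Union>x\<in>W. V x)"
  have "polytope K" unfolding K_def
    using V assms(1) by (intro polytope_convex_hull finite_UN_I) auto
  moreover have "K \<subseteq> X" unfolding K_def
    using V hull_subset[of _ convex] by (intro hull_minimal assms(4)) blast
  moreover have "interior (convex hull V x) \<subseteq> interior K" if "x \<in> W" for x
    unfolding K_def using that by (intro interior_mono hull_mono) blast
  ultimately show ?thesis using V by blast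
qed

lemma polyhedron_as_halfspaces:
  fixes K :: "'a::euclidean_space set"
  assumes "polyhedron K"
  obtains m :: nat and a b where "\<forall>j\<in>{1..m}. a j \<noteq> 0" "K = {x. \<forall>j\<in>{1..m}. a j \<bullet> x \<le> b j}"
proof -
  obtain F where F: "finite F" "K = \<Inter>F" "\<forall>h\<in>F. \<exists>a b. a \<noteq> 0 \<and> h = {x. a \<bullet> x \<le> b}"
    using assms unfolding polyhedron_def by blast
  obtain g where g: "bij_betw g {1..card F} F" using ex_bij_betw_nat_finite_1[OF F(1)] by blast
  have "\<forall>j\<in>{1..card F}. \<exists>ab. fst ab \<noteq> 0 \<and> g j = {x. fst ab \<bullet> x \<le> snd ab}"
    using F(3) bij_betw_apply[OF g] by fastforce
  then obtain ab where ab: "\<forall>j\<in>{1..card F}. fst (ab j) \<noteq> 0 \<and> g j = {x. fst (ab j) \<bullet> x \<le> snd (ab j)}"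
    by (rule bchoice[THEN exE])
  define a where "a j = fst (ab j)" for j
  define b where "b j = snd (ab j)" for j
  have "K = \<Inter>(g ` {1..card F})" using F(2) bij_betw_imp_surj_on[OF g] by simp
  also have "\<dots> = {x. \<forall>j\<in>{1..card F}. a j \<bullet> x \<le> b j}" using ab by (auto simp: a_def b_def)
  finally show thesis using that[of "card F" a b] ab by (simp add: a_def)
qed

lemma polytope_around_witnesses:
  fixes H :: "nat \<Rightarrow> 'a::euclidean_space \<times> real"
  assumes st: "stable_pair n H X"
  obtains m :: nat and a b p where
    "\<forall>j\<in>{1..m}. a j \<noteq> 0" "compact {x. \<forall>j\<in>{1..m}. a j \<bullet> x \<le> b j}"
    "{x. \<forall>j\<in>{1..m}. a j \<bullet> x \<le> b j} \<subseteq> X"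
    "\<forall>\<sigma>\<in>hcode n H X. pos_indices n H (p \<sigma>) = \<sigma> \<and> (\<forall>k\<in>{1..n}. p \<sigma> \<notin> hyp (H k)) \<and>
       (\<forall>j\<in>{1..m}. a j \<bullet> p \<sigma> < b j)"
proof -
  let ?C = "hcode n H X"
  have X: "open X" "convex X" using st by (simp_all add: stable_pair_def)
  have "\<forall>\<sigma>\<in>?C. \<exists>p. p \<in> X \<and> pos_indices n H p = \<sigma> \<and> (\<forall>k\<in>{1..n}. p \<notin> hyp (H k))"
    using codeword_witness[OF st] by blast
  from bchoice[OF this] obtain p
    where p: "\<forall>\<sigma>\<in>?C. p \<sigma> \<in> X \<and> pos_indices n H (p \<sigma>) = \<sigma> \<and> (\<forall>k\<in>{1..n}. p \<sigma> \<notin> hyp (H k))"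
    by blast
  obtain K where K: "polytope K" "K \<subseteq> X" "p ` ?C \<subseteq> interior K"
    using polytope_neighbourhood[of "p ` ?C" X] finite_hcode p X by blast
  obtain m :: nat and a b where a: "\<forall>j\<in>{1..m}. a j \<noteq> 0"
    and K_eq: "K = {x. \<forall>j\<in>{1..m}. a j \<bullet> x \<le> b j}"
    using polyhedron_as_halfspaces[OF polytope_imp_polyhedron[OF K(1)]] by blast
  have "a j \<bullet> p \<sigma> < b j" if "\<sigma> \<in> ?C" "j \<in> {1..m}" for \<sigma> j
  proof -
    have "interior K \<subseteq> interior {x. a j \<bullet> x \<le> b j}" unfolding K_eq using that(2)
      by (intro interior_mono) blast
    then show ?thesis using K(3) a that by auto
  qed
  then show thesis
    using that[of m a b p] a polytope_imp_compact[OF K(1)] K(2) p unfolding K_eq by blast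
qed

lemma polytope_with_code_margin:
  fixes H :: "nat \<Rightarrow> 'a::euclidean_space \<times> real"
  assumes st: "stable_pair n H X"
  obtains m :: nat and a b p and e :: real where
    "\<forall>j\<in>{1..m}. a j \<noteq> 0" "compact {x. \<forall>j\<in>{1..m}. a j \<bullet> x \<le> b j}" "0 < e"
    "\<forall>\<sigma>\<in>hcode n H X. \<forall>c. offsets_within n H e c \<longrightarrow> pos_indices n (with_offsets H c) (p \<sigma>) = \<sigma>"
    "\<forall>\<sigma>\<in>hcode n H X. \<forall>j\<in>{1..m}. a j \<bullet> p \<sigma> < b j - e"
    "\<forall>c. offsets_within n H e c \<longrightarrow>
       hcode n (with_offsets H c) {x. \<forall>j\<in>{1..m}. a j \<bullet> x \<le> b j} \<subseteq> hcode n H X"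
proof -
  let ?C = "hcode n H X"
  obtain m :: nat and a b p where a: "\<forall>j\<in>{1..m}. a j \<noteq> 0"
    and K: "compact {x. \<forall>j\<in>{1..m}. a j \<bullet> x \<le> b j}" "{x. \<forall>j\<in>{1..m}. a j \<bullet> x \<le> b j} \<subseteq> X"
    and p: "\<forall>\<sigma>\<in>?C. pos_indices n H (p \<sigma>) = \<sigma> \<and> (\<forall>k\<in>{1..n}. p \<sigma> \<notin> hyp (H k)) \<and>
       (\<forall>j\<in>{1..m}. a j \<bullet> p \<sigma> < b j)"
    using polytope_around_witnesses[OF st] by blast
  let ?K = "{x. \<forall>j\<in>{1..m}. a j \<bullet> x \<le> b j}"
  have "\<forall>\<^sub>F e in at_right 0. \<forall>\<sigma>\<in>?C. \<forall>c. offsets_within n H e c \<longrightarrow>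
      pos_indices n (with_offsets H c) (p \<sigma>) = \<sigma>"
  proof (intro eventually_ball_finite[OF finite_hcode] ballI)
    fix \<sigma> assume "\<sigma> \<in> ?C"
    then show "\<forall>\<^sub>F e in at_right 0. \<forall>c. offsets_within n H e c \<longrightarrow>
        pos_indices n (with_offsets H c) (p \<sigma>) = \<sigma>"
      using p eventually_pos_indices_with_offsets[of n "p \<sigma>" H] by simp
  qed
  moreover have "\<forall>\<^sub>F e in at_right 0. \<forall>\<sigma>\<in>?C. \<forall>j\<in>{1..m}. a j \<bullet> p \<sigma> < b j - e"
  proof (intro eventually_ball_finite[OF finite_hcode] eventually_ball_finite[OF finite_atLeastAtMost]
      ballI)
    fix \<sigma> j assume "\<sigma> \<in> ?C" "j \<in> {1..m}"
    then have "0 < b j - a j \<bullet> p \<sigma>" using p by simp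
    from eventually_at_right_0_less[OF this] show "\<forall>\<^sub>F e in at_right 0. a j \<bullet> p \<sigma> < b j - e"
      by (rule eventually_mono) linarith
  qed
  moreover note eventually_perturbed_code_subset[OF st K] eventually_at_right_less[of 0]
  ultimately have "\<forall>\<^sub>F e in at_right 0.
      (\<forall>\<sigma>\<in>?C. \<forall>c. offsets_within n H e c \<longrightarrow>
         pos_indices n (with_offsets H c) (p \<sigma>) = \<sigma>) \<and>
      (\<forall>\<sigma>\<in>?C. \<forall>j\<in>{1..m}. a j \<bullet> p \<sigma> < b j - e) \<and>
      (\<forall>c. offsets_within n H e c \<longrightarrow> hcode n (with_offsets H c) ?K \<subseteq> ?C) \<and> 0 < e"
    by (simp add: eventually_conj_iff)
  then obtain e where "0 < e"
    "\<forall>\<sigma>\<in>?C. \<forall>c. offsets_within n H e c \<longrightarrow> pos_indices n (with_offsets H c) (p \<sigma>) = \<sigma>"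
    "\<forall>\<sigma>\<in>?C. \<forall>j\<in>{1..m}. a j \<bullet> p \<sigma> < b j - e"
    "\<forall>c. offsets_within n H e c \<longrightarrow> hcode n (with_offsets H c) ?K \<subseteq> ?C"
    using eventually_happens'[OF trivial_limit_at_right_real] by blast
  with a K(1) show thesis by (rule that)
qed

lemma polytope_realizing_code:
  fixes H :: "nat \<Rightarrow> 'a::euclidean_space \<times> real"
  assumes st: "stable_pair n H X"
  obtains m :: nat and a b and e :: real where
    "\<forall>j\<in>{1..m}. a j \<noteq> 0" "compact {x. \<forall>j\<in>{1..m}. a j \<bullet> x \<le> b j}" "0 < e"
    "\<And>c d. offsets_within n H e c \<Longrightarrow> \<forall>j\<in>{1..m}. b j - e < d j \<and> d j < b j \<Longrightarrow>
       hcode n (with_offsets H c) {x. \<forall>j\<in>{1..m}. a j \<bullet> x < d j} = hcode n H X"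
proof -
  obtain m :: nat and a b p and e :: real where a: "\<forall>j\<in>{1..m}. a j \<noteq> 0"
    and K: "compact {x. \<forall>j\<in>{1..m}. a j \<bullet> x \<le> b j}" and "0 < e"
    and witness: "\<forall>\<sigma>\<in>hcode n H X. \<forall>c. offsets_within n H e c \<longrightarrow>
       pos_indices n (with_offsets H c) (p \<sigma>) = \<sigma>"
    and inside: "\<forall>\<sigma>\<in>hcode n H X. \<forall>j\<in>{1..m}. a j \<bullet> p \<sigma> < b j - e"
    and code_K: "\<forall>c. offsets_within n H e c \<longrightarrow>
       hcode n (with_offsets H c) {x. \<forall>j\<in>{1..m}. a j \<bullet> x \<le> b j} \<subseteq> hcode n H X"
    by (rule polytope_with_code_margin[OF st])
  have "hcode n (with_offsets H c) {x. \<forall>j\<in>{1..m}. a j \<bullet> x < d j} = hcode n H X"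
    if c: "offsets_within n H e c" and d: "\<forall>j\<in>{1..m}. b j - e < d j \<and> d j < b j" for c d
  proof (rule equalityI)
    have "{x. \<forall>j\<in>{1..m}. a j \<bullet> x < d j} \<subseteq> {x. \<forall>j\<in>{1..m}. a j \<bullet> x \<le> b j}"
      using d by force
    then show "hcode n (with_offsets H c) {x. \<forall>j\<in>{1..m}. a j \<bullet> x < d j} \<subseteq> hcode n H X"
      using code_K c by (meson hcode_mono order_trans)
  next
    show "hcode n H X \<subseteq> hcode n (with_offsets H c) {x. \<forall>j\<in>{1..m}. a j \<bullet> x < d j}"
    proof
      fix \<sigma> assume "\<sigma> \<in> hcode n H X"
      then have "pos_indices n (with_offsets H c) (p \<sigma>) = \<sigma>" using witness c by blast
      moreover have "p \<sigma> \<in> {x. \<forall>j\<in>{1..m}. a j \<bullet> x < d j}"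
        using inside \<open>\<sigma> \<in> hcode n H X\<close> d by force
      ultimately show "\<sigma> \<in> hcode n (with_offsets H c) {x. \<forall>j\<in>{1..m}. a j \<bullet> x < d j}"
        by (auto simp: hcode_eq_image)
    qed
  qed
  then show thesis using that a K \<open>0 < e\<close> by blast
qed

theorem lemma7p3:
  fixes n :: nat and C :: "nat set set"
    and H :: "nat \<Rightarrow> 'a::euclidean_space \<times> real" and X :: "'a set"
  assumes "stable_pair n H X" and "C = hcode n H X"
  shows "\<exists>(H' :: nat \<Rightarrow> 'a \<times> real) (m :: nat) (B :: nat \<Rightarrow> 'a \<times> real).
           (\<forall>j\<in>{1..m}. valid_hyp (B j)) \<and>
           bounded (\<Inter>j\<in>{1..m}. hpos (B j)) \<and>
           stable_pair n H' (\<Inter>j\<in>{1..m}. hpos (B j)) \<and>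
           C = hcode n H' (\<Inter>j\<in>{1..m}. hpos (B j)) \<and>
           generic_intersections (join_fam H' B) (Inl ` {1..n} \<union> Inr ` {1..m})"
proof -
  obtain m :: nat and a b and e :: real where a: "\<forall>j\<in>{1..m}. a j \<noteq> 0"
    and K: "compact {x. \<forall>j\<in>{1..m}. a j \<bullet> x \<le> b j}" and "0 < e"
    and code: "\<And>c d. offsets_within n H e c \<Longrightarrow> \<forall>j\<in>{1..m}. b j - e < d j \<and> d j < b j \<Longrightarrow>
       hcode n (with_offsets H c) {x. \<forall>j\<in>{1..m}. a j \<bullet> x < d j} = C"
    using polytope_realizing_code[OF assms(1)] unfolding assms(2) by blast
  obtain c d where c: "offsets_within n H e c" and d: "\<forall>j\<in>{1..m}. b j - e < d j \<and> d j < b j"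
    and gen: "generic_intersections (join_fam (with_offsets H c) (\<lambda>j. (- a j, - d j)))
       (Inl ` {1..n} \<union> Inr ` {1..m})"
    using generic_perturbation[OF \<open>0 < e\<close>] by blast
  define B where "B = (\<lambda>j. (- a j, - d j))"
  have P_eq: "(\<Inter>j\<in>{1..m}. hpos (B j)) = {x. \<forall>j\<in>{1..m}. a j \<bullet> x < d j}"
    by (auto simp: B_def hpos_def)
  have "\<forall>i\<in>{1..n}. valid_hyp (with_offsets H c i)"
    using assms(1) by (simp add: stable_pair_def valid_hyp_def)
  moreover have "open (\<Inter>j\<in>{1..m}. hpos (B j))" "convex (\<Inter>j\<in>{1..m}. hpos (B j))"
    by (simp_all add: open_INT open_hpos convex_INT convex_hpos)
  ultimately have "stable_pair n (with_offsets H c) (\<Inter>j\<in>{1..m}. hpos (B j))"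
    by (rule stable_pair_if_generic[OF gen[folded B_def]])
  moreover have "(\<Inter>j\<in>{1..m}. hpos (B j)) \<subseteq> {x. \<forall>j\<in>{1..m}. a j \<bullet> x \<le> b j}"
    using d unfolding P_eq by force
  then have "bounded (\<Inter>j\<in>{1..m}. hpos (B j))" by (rule bounded_subset[OF compact_imp_bounded[OF K]])
  moreover have "\<forall>j\<in>{1..m}. valid_hyp (B j)" using a by (simp add: B_def valid_hyp_def)
  moreover have "C = hcode n (with_offsets H c) (\<Inter>j\<in>{1..m}. hpos (B j))"
    using code[OF c d] unfolding P_eq by simp
  ultimately show ?thesis using gen[folded B_def] by blast
qed

end
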